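(* Let $T:X\rightrightarrows X^*$ be a pseudomonotone operator. If $\widehat{T}=T^\rho_D$, then $T$ is $D$-maximal pseudomonotone. Moreover, if $\mathrm{dom}(T)$ is convex, the converse holds: if $T$ is $D$-maximal pseudomonotone then $\widehat T=T^\rho_D$.
   Context: $X$ is a real Banach space with dual $X^*$ and pairing $\langle x,x^*\rangle=x^*(x)$. A multivalued operator $T:X\rightrightarrows X^*$ is identified with its graph $T\subset X\times X^*$; $T(x)=\{x^*:(x,x^* )\in T\}$, $\mathrm{dom}(T)=\{x:T(x)\ne\emptyset\}$, $Z_T=\{x:0\in T(x)\}$. For $A\subset X^*$, $\operatorname{cone}(A)=\{tv:t\ge0,v\in A\}$ and $\operatorname{cone}_\circ(A)=\{tv:t>0,v\in A\}$. For $C\subset X$, $N_C(x)=\{x^*: \langle y-x,x^*\rangle\le0\ \forall y\in C\}$. For $(x,x^* ),(y,y^* )\in X\times X^*$, write $(x,x^* )\sim_p(y,y^* )$ if either $\min\{\langle x-y,y^*\rangle,\langle y-x,x^*\rangle\}<0$ or $\langle x-y,y^*\rangle=\langle y-x,x^*\rangle=0$. The pseudomonotone polar is $T^\rho=\{(x,x^* ): (x,x^* )\sim_p(y,y^* )\ \forall (y,y^* )\in T\}$, and $T^\rho_D$ denotes its restriction to $\mathrm{dom}(T)$. $T$ is pseudomonotone if for all $(x,x^* ),(y,y^* )\in T$, $\langle y-x,x^*\rangle\ge0$ implies $\langle y-x,y^*\rangle\ge0$. Two operators $T,S$ are equivalent if $\mathrm{dom}(T)=\mathrm{dom}(S)$,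 $Z_T=Z_S$ and $\operatorname{cone}(T(x))=\operatorname{cone}(S(x))$ for all $x\in\mathrm{dom}(T)\setminus Z_T$. $T$ is $D$-maximal pseudomonotone if $T$ is pseudomonotone and there is a pseudomonotone operator $S$ equivalent to $T$ which has no proper pseudomonotone extension with the same domain. For $x\in Z_T$, $L(T,x)=\{y\in X:\exists y^*\in T(y),\ \langle x-y,y^*\rangle\ge0\}$, and $\widehat T(x)=N_{L(T,x)}(x)$ if $x\in Z_T$, $\widehat T(x)=\operatorname{cone}_\circ(T(x))$ if $x\in\mathrm{dom}(T)\setminus Z_T$, $\widehat T(x)=\emptyset$ if $x\notin\mathrm{dom}(T)$. *)

theory Defs
  imports "HOL-Analysis.Analysis"
begin

text \<open>X is a real Banach space ('a::banach), its dual is the space of bounded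
 linear functionals 'a \<Rightarrow>L real; pairing <x,x*> = blinfun_apply x* x.
 A multivalued operator is identified with its graph.\<close>

type_synonym ('a) mop = "('a \<times> ('a \<Rightarrow>\<^sub>L real)) set"

definition opval :: "('a::real_normed_vector) mop \<Rightarrow> 'a \<Rightarrow> ('a \<Rightarrow>\<^sub>L real) set" where
  "opval T x = {v. (x, v) \<in> T}"

definition opdom :: "('a::real_normed_vector) mop \<Rightarrow> 'a set" where
  "opdom T = {x. opval T x \<noteq> {}}"

definition zeros :: "('a::real_normed_vector) mop \<Rightarrow> 'a set" where
  "zeros T = {x. 0 \<in> opval T x}"

definition pcone :: "('a::real_normed_vector \<Rightarrow>\<^sub>L real) set \<Rightarrow> ('a \<Rightarrow>\<^sub>L real) set" where
  "pcone A = {t *\<^sub>R v | t v. t \<ge> 0 \<and> v \<in> A}"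

definition pcone_open :: "('a::real_normed_vector \<Rightarrow>\<^sub>L real) set \<Rightarrow> ('a \<Rightarrow>\<^sub>L real) set" where
  "pcone_open A = {t *\<^sub>R v | t v. t > 0 \<and> v \<in> A}"

definition normal_cone :: "('a::real_normed_vector) set \<Rightarrow> 'a \<Rightarrow> ('a \<Rightarrow>\<^sub>L real) set" where
  "normal_cone C x = {v. \<forall>y\<in>C. blinfun_apply v (y - x) \<le> 0}"

definition sim_p :: "'a::real_normed_vector \<times> ('a \<Rightarrow>\<^sub>L real) \<Rightarrow> 'a \<times> ('a \<Rightarrow>\<^sub>L real) \<Rightarrow> bool" where
  "sim_p p q = (let (x, xs) = p; (y, ys) = q in
      min (blinfun_apply ys (x - y)) (blinfun_apply xs (y - x)) < 0 \<or>
      (blinfun_apply ys (x - y) = 0 \<and> blinfun_apply xs (y - x) = 0))"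

definition pm_polar :: "('a::real_normed_vector) mop \<Rightarrow> 'a mop" where
  "pm_polar T = {p. \<forall>q\<in>T. sim_p p q}"

definition pm_polar_D :: "('a::real_normed_vector) mop \<Rightarrow> 'a mop" where
  "pm_polar_D T = {p \<in> pm_polar T. fst p \<in> opdom T}"

definition pseudomonotone :: "('a::real_normed_vector) mop \<Rightarrow> bool" where
  "pseudomonotone T = (\<forall>x xs y ys. (x, xs) \<in> T \<longrightarrow> (y, ys) \<in> T \<longrightarrow>
      blinfun_apply xs (y - x) \<ge> 0 \<longrightarrow> blinfun_apply ys (y - x) \<ge> 0)"

definition op_equivalent :: "('a::real_normed_vector) mop \<Rightarrow> 'a mop \<Rightarrow> bool" where
  "op_equivalent T S = (opdom T = opdom S \<and> zeros T = zeros S \<and>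
      (\<forall>x \<in> opdom T - zeros T. pcone (opval T x) = pcone (opval S x)))"

definition D_maximal_pm :: "('a::real_normed_vector) mop \<Rightarrow> bool" where
  "D_maximal_pm T = (pseudomonotone T \<and>
     (\<exists>S. pseudomonotone S \<and> op_equivalent T S \<and>
        (\<forall>S'. pseudomonotone S' \<and> S \<subseteq> S' \<and> opdom S' = opdom S \<longrightarrow> S' = S)))"

definition Lset :: "('a::real_normed_vector) mop \<Rightarrow> 'a \<Rightarrow> 'a set" where
  "Lset T x = {y. \<exists>ys \<in> opval T y. blinfun_apply ys (x - y) \<ge> 0}"

definition That :: "('a::real_normed_vector) mop \<Rightarrow> 'a mop" where
  "That T = {(x, v). (x \<in> zeros T \<and> v \<in> normal_cone (Lset T x) x) \<or>
                     (x \<in> opdom T - zeros T \<and> v \<in> pcone_open (opval T x))}"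

end

theory Submission
  imports Defs
begin

text \<open>\<open>That T\<close> is pseudomonotone, contains \<open>T\<close> and is equivalent to it, so every
  pseudomonotone extension of \<open>That T\<close> with the same domain is contained in the
  pseudomonotone polar of \<open>T\<close> restricted to \<open>dom T\<close>; if that set is \<open>That T\<close>, then
  \<open>That T\<close> witnesses D-maximality.

  Conversely, let \<open>S\<close> be pseudomonotone, equivalent to \<open>T\<close> and without proper
  pseudomonotone extension over its domain. Outside \<open>Z\<^sub>T\<close> the values of \<open>S\<close> are positive
  multiples of values of \<open>T\<close>, so elements of the polar of \<open>T\<close> are compatible with them;
  at a zero \<open>y\<close> of \<open>T\<close>, convexity of the domain allows testing against \<open>S\<close> at the
  midpoint of \<open>x\<close> and \<open>y\<close>. Hence \<open>T\<^sup>\<rho>\<^sub>D\<close> is compatible with \<open>S\<close> and by maximality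
  lies in \<open>S\<close>, whose values off \<open>Z\<^sub>T\<close> lie in \<open>cone\<^sub>\<circ>(T x)\<close>; at points of \<open>Z\<^sub>T\<close> the
  polar lies in the normal cone to \<open>L(T, x)\<close> directly.\<close>

lemma sim_p_iff:
  "sim_p (x, xs) (y, ys) \<longleftrightarrow>
     (blinfun_apply xs (y - x) \<ge> 0 \<longrightarrow> blinfun_apply ys (x - y) \<le> 0) \<and>
     (blinfun_apply ys (x - y) \<ge> 0 \<longrightarrow> blinfun_apply xs (y - x) \<le> 0)"
  unfolding sim_p_def by (auto simp: min_def)

lemma sim_p_sym: "sim_p p q \<longleftrightarrow> sim_p q p"
  by (cases p; cases q) (auto simp: sim_p_iff)

lemma sim_p_refl: "sim_p p p"
  by (cases p) (simp add: sim_p_iff)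

lemma pseudomonotone_iff_sim_p: "pseudomonotone S \<longleftrightarrow> (\<forall>p\<in>S. \<forall>q\<in>S. sim_p p q)"
  unfolding pseudomonotone_def by (force simp: sim_p_iff blinfun.diff_right)

lemma sim_p_scaleR_right:
  assumes "s > 0"
  shows "sim_p (x, xs) (y, s *\<^sub>R ys) \<longleftrightarrow> sim_p (x, xs) (y, ys)"
  using assms by (simp add: sim_p_iff blinfun.scaleR_left zero_le_mult_iff mult_le_0_iff)

lemma pseudomonotone_insert_iff:
  "pseudomonotone (insert p S) \<longleftrightarrow> pseudomonotone S \<and> (\<forall>q\<in>S. sim_p p q)"
  unfolding pseudomonotone_iff_sim_p by (metis insert_iff sim_p_refl sim_p_sym)

lemma mem_opdom_iff: "x \<in> opdom T \<longleftrightarrow> (\<exists>v. (x, v) \<in> T)"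
  by (simp add: opdom_def opval_def)

lemma mem_zeros_iff: "x \<in> zeros T \<longleftrightarrow> (x, 0) \<in> T"
  by (simp add: zeros_def opval_def)

lemma pseudomonotone_subset_pm_polar_D:
  assumes "pseudomonotone S" "T \<subseteq> S" "opdom S = opdom T"
  shows "S \<subseteq> pm_polar_D T"
  using assms unfolding pm_polar_D_def pm_polar_def pseudomonotone_iff_sim_p
  by (force simp: mem_opdom_iff)

lemma maximal_pseudomonotone_contains_pm_polar_D:
  assumes "pseudomonotone S"
    and "\<forall>S'. pseudomonotone S' \<and> S \<subseteq> S' \<and> opdom S' = opdom S \<longrightarrow> S' = S"
  shows "pm_polar_D S \<subseteq> S"
proof
  fix p assume p: "p \<in> pm_polar_D S"
  then have "pseudomonotone (insert p S)"
    using assms(1) by (simp add: pseudomonotone_insert_iff pm_polar_D_def pm_polar_def)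
  moreover have "opdom (insert p S) = opdom S"
    using p by (force simp: pm_polar_D_def mem_opdom_iff)
  ultimately show "p \<in> S" using assms(2) by blast
qed

lemma mem_pcone_open_self: "v \<in> A \<Longrightarrow> v \<in> pcone_open A"
  unfolding pcone_open_def by (auto intro!: exI[of _ 1])

lemma mem_pcone_openE:
  assumes "v \<in> pcone_open A"
  obtains t u where "t > 0" "u \<in> A" "v = t *\<^sub>R u"
  using assms unfolding pcone_open_def by blast

lemma pcone_pcone_open: "pcone (pcone_open A) = pcone A"
proof
  show "pcone (pcone_open A) \<subseteq> pcone A"
  proof
    fix w assume "w \<in> pcone (pcone_open A)"
    then obtain t s v where "t \<ge> 0" "s > 0" "v \<in> A" "w = (t * s) *\<^sub>R v"
      unfolding pcone_def pcone_open_def by auto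
    moreover have "t * s \<ge> 0" using calculation by simp
    ultimately show "w \<in> pcone A"
      unfolding pcone_def by blast
  qed
  show "pcone A \<subseteq> pcone (pcone_open A)"
    unfolding pcone_def using mem_pcone_open_self by blast
qed

lemma zeros_subset_opdom: "zeros T \<subseteq> opdom T"
  unfolding zeros_def opdom_def by auto

lemma zero_notin_pcone_open: "0 \<notin> A \<Longrightarrow> 0 \<notin> pcone_open A"
  unfolding pcone_open_def by auto

lemma opval_That:
  "opval (That T) x =
     (if x \<in> zeros T then normal_cone (Lset T x) x
      else if x \<in> opdom T then pcone_open (opval T x) else {})"
  using zeros_subset_opdom by (auto simp: That_def opval_def)

lemma opdom_That: "opdom (That T) = opdom T"
proof -
  have "opval (That T) x \<noteq> {}" if x: "x \<in> opdom T" for x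
  proof (cases "x \<in> zeros T")
    case True
    then have "0 \<in> opval (That T) x" by (simp add: opval_That normal_cone_def)
    then show ?thesis by blast
  next
    case False
    from x obtain v where "v \<in> opval T x" by (auto simp: opdom_def)
    then have "v \<in> opval (That T) x" using x False by (simp add: opval_That mem_pcone_open_self)
    then show ?thesis by blast
  qed
  moreover have "opval (That T) x = {}" if "x \<notin> opdom T" for x
    using that zeros_subset_opdom by (auto simp: opval_That)
  ultimately show ?thesis unfolding opdom_def[of "That T"] by blast
qed

lemma zeros_That: "zeros (That T) = zeros T"
  using zero_notin_pcone_open[of "opval T _"]
  by (auto simp: zeros_def opval_That normal_cone_def)

lemma op_equivalent_That: "op_equivalent T (That T)"
  by (simp add: op_equivalent_def opdom_That zeros_That opval_That pcone_pcone_open)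

lemma pseudomonotone_Lset:
  assumes "pseudomonotone T" "(y, w) \<in> T" "x \<in> Lset T y"
  shows "blinfun_apply w (y - x) \<ge> 0"
  using assms by (auto simp: pseudomonotone_def Lset_def opval_def)

lemma subset_That:
  assumes "pseudomonotone T"
  shows "T \<subseteq> That T"
proof
  fix p assume p: "p \<in> T"
  obtain x v where p_eq: "p = (x, v)" by (cases p)
  have "x \<in> opdom T" using p p_eq by (auto simp: mem_opdom_iff)
  moreover have "v \<in> normal_cone (Lset T x) x"
    using pseudomonotone_Lset[OF assms p[unfolded p_eq]]
    by (auto simp: normal_cone_def blinfun.diff_right)
  ultimately show "p \<in> That T"
    using p by (auto simp: That_def p_eq opval_def intro: mem_pcone_open_self)
qed

lemma That_in_Lset:
  assumes "(x, xs) \<in> That T" "blinfun_apply xs (y - x) \<ge> 0"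
  shows "x \<in> Lset T y"
proof (cases "x \<in> zeros T")
  case True
  then show ?thesis unfolding Lset_def zeros_def by (auto intro!: bexI[of _ 0])
next
  case False
  with assms(1) have "xs \<in> pcone_open (opval T x)" by (simp add: That_def)
  then obtain t u where "t > 0" "u \<in> opval T x" "xs = t *\<^sub>R u"
    by (rule mem_pcone_openE)
  with assms(2) show ?thesis
    by (auto simp: Lset_def blinfun.scaleR_left zero_le_mult_iff)
qed

lemma That_nonneg_on_Lset:
  assumes "pseudomonotone T" "(y, ys) \<in> That T" "x \<in> Lset T y"
  shows "blinfun_apply ys (y - x) \<ge> 0"
proof (cases "y \<in> zeros T")
  case True
  with assms(2) have "ys \<in> normal_cone (Lset T y) y" by (simp add: That_def)
  with assms(3) show ?thesis by (auto simp: normal_cone_def blinfun.diff_right)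
next
  case False
  with assms(2) have "ys \<in> pcone_open (opval T y)" by (simp add: That_def)
  then obtain s w where "s > 0" "(y, w) \<in> T" "ys = s *\<^sub>R w"
    by (auto simp: opval_def elim: mem_pcone_openE)
  with pseudomonotone_Lset[OF assms(1) _ assms(3)] show ?thesis
    by (simp add: blinfun.scaleR_left)
qed

lemma pseudomonotone_That:
  assumes "pseudomonotone T"
  shows "pseudomonotone (That T)"
  unfolding pseudomonotone_def
  using That_in_Lset That_nonneg_on_Lset[OF assms] by blast

lemma pm_polar_at_zero_in_That:
  assumes "x \<in> zeros T" "(x, xs) \<in> pm_polar T"
  shows "(x, xs) \<in> That T"
proof -
  have "xs \<in> normal_cone (Lset T x) x"
    using assms(2) by (auto simp: normal_cone_def Lset_def opval_def pm_polar_def sim_p_iff)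
  with assms(1) show ?thesis by (simp add: That_def)
qed

lemma op_equivalent_pcone_open:
  assumes "op_equivalent T S" "(y, ys) \<in> S" "y \<notin> zeros T"
  shows "ys \<in> pcone_open (opval T y)"
proof -
  have "y \<in> opdom T" using assms(1,2) by (auto simp: op_equivalent_def mem_opdom_iff)
  with assms have "ys \<in> pcone (opval T y)"
    by (auto simp: op_equivalent_def pcone_def opval_def intro!: exI[of _ 1])
  then obtain s w where "s \<ge> 0" "w \<in> opval T y" "ys = s *\<^sub>R w"
    unfolding pcone_def by blast
  moreover have "s \<noteq> 0"
    using assms calculation by (auto simp: op_equivalent_def mem_zeros_iff)
  ultimately show ?thesis unfolding pcone_open_def by force
qed

lemma pm_polar_sim_p_pcone_open:
  assumes "(x, xs) \<in> pm_polar T" "ys \<in> pcone_open (opval T y)"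
  shows "sim_p (x, xs) (y, ys)"
  using assms by (auto simp: pm_polar_def opval_def sim_p_scaleR_right elim!: mem_pcone_openE)

lemma blinfun_apply_midpoint:
  fixes f :: "'a::real_normed_vector \<Rightarrow>\<^sub>L real"
  shows "blinfun_apply f (midpoint x y) = (blinfun_apply f x + blinfun_apply f y) / 2"
  by (simp add: midpoint_def blinfun.scaleR_right blinfun.add_right)

lemma pseudomonotone_midpoint_le:
  assumes "pseudomonotone S" "(y, ys) \<in> S" "(midpoint x y, w) \<in> S"
    and "blinfun_apply w (x - y) \<le> 0"
  shows "blinfun_apply ys (x - y) \<le> 0"
proof (rule ccontr)
  let ?z = "midpoint x y"
  assume "\<not> ?thesis"
  then have "blinfun_apply ys (?z - y) \<ge> 0"
    by (simp add: blinfun.diff_right blinfun_apply_midpoint)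
  then have "blinfun_apply w (?z - y) \<ge> 0"
    using assms(1-3) unfolding pseudomonotone_def by blast
  then have "blinfun_apply w (y - ?z) \<ge> 0"
    using assms(4) by (simp add: blinfun.diff_right blinfun_apply_midpoint)
  then have "blinfun_apply ys (y - ?z) \<ge> 0"
    using assms(1-3) unfolding pseudomonotone_def by blast
  with \<open>\<not> ?thesis\<close> show False
    by (simp add: blinfun.diff_right blinfun_apply_midpoint)
qed

lemma pm_polar_D_subset_pm_polar_of_equivalent:
  assumes pm: "pseudomonotone S" and equiv: "op_equivalent T S" and cvx: "convex (opdom T)"
  shows "pm_polar_D T \<subseteq> pm_polar S"
proof
  fix p assume "p \<in> pm_polar_D T"
  then obtain x xs where p_eq: "p = (x, xs)" and x: "x \<in> opdom T"
    and polar: "(x, xs) \<in> pm_polar T"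
    by (cases p) (auto simp: pm_polar_D_def)
  have sim_nonzero: "sim_p (x, xs) (y, ys)" if "(y, ys) \<in> S" "y \<notin> zeros T" for y ys
    using pm_polar_sim_p_pcone_open[OF polar op_equivalent_pcone_open[OF equiv that]] .
  have "sim_p (x, xs) (y, ys)" if y: "(y, ys) \<in> S" for y ys
  proof (cases "y \<in> zeros T")
    case True
    then have "blinfun_apply xs (y - x) \<le> 0"
      using polar by (auto simp: pm_polar_def mem_zeros_iff sim_p_iff)
    moreover have "blinfun_apply ys (x - y) \<le> 0" if xs_zero: "blinfun_apply xs (y - x) = 0"
    proof -
      let ?z = "midpoint x y"
      have "y \<in> opdom T" using True zeros_subset_opdom by blast
      with x cvx have "?z \<in> opdom T"
        by (auto simp: midpoint_def scaleR_add_right intro: convexD)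
      obtain w where w: "(?z, w) \<in> S" "blinfun_apply w (x - y) \<le> 0"
      proof (cases "?z \<in> zeros T")
        case True
        then have "?z \<in> zeros S" using equiv by (simp add: op_equivalent_def)
        then have "(?z, 0) \<in> S" by (simp add: mem_zeros_iff)
        then show ?thesis using that by simp
      next
        case False
        have "?z \<in> opdom S" using \<open>?z \<in> opdom T\<close> equiv by (simp add: op_equivalent_def)
        then obtain w where w: "(?z, w) \<in> S" by (auto simp: mem_opdom_iff)
        have "blinfun_apply xs (?z - x) \<ge> 0"
          using xs_zero by (simp add: blinfun.diff_right blinfun_apply_midpoint)
        then have "blinfun_apply w (x - ?z) \<le> 0"
          using sim_nonzero[OF w False] by (simp add: sim_p_iff)
        then show ?thesis
          using that[OF w] by (simp add: blinfun.diff_right blinfun_apply_midpoint)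
      qed
      show ?thesis by (rule pseudomonotone_midpoint_le[OF pm y w])
    qed
    ultimately show ?thesis by (auto simp: sim_p_iff)
  qed (rule sim_nonzero[OF y])
  then show "p \<in> pm_polar S" by (auto simp: pm_polar_def p_eq)
qed

lemma D_maximal_pm_if_That_eq_pm_polar_D:
  assumes pm: "pseudomonotone T" and eq: "That T = pm_polar_D T"
  shows "D_maximal_pm T"
  unfolding D_maximal_pm_def
proof (intro conjI exI[of _ "That T"] allI impI)
  fix S' assume S': "pseudomonotone S' \<and> That T \<subseteq> S' \<and> opdom S' = opdom (That T)"
  then have "S' \<subseteq> pm_polar_D T"
    using subset_That[OF pm] by (intro pseudomonotone_subset_pm_polar_D) (auto simp: opdom_That)
  with S' eq show "S' = That T" by blast
qed (use pm pseudomonotone_That op_equivalent_That in auto)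

lemma That_eq_pm_polar_D_if_D_maximal_pm:
  assumes pm: "pseudomonotone T" and cvx: "convex (opdom T)" and max: "D_maximal_pm T"
  shows "That T = pm_polar_D T"
proof
  show "That T \<subseteq> pm_polar_D T"
    by (rule pseudomonotone_subset_pm_polar_D)
      (simp_all add: pseudomonotone_That[OF pm] subset_That[OF pm] opdom_That)
  obtain S where pmS: "pseudomonotone S" and equiv: "op_equivalent T S"
    and maxS: "\<forall>S'. pseudomonotone S' \<and> S \<subseteq> S' \<and> opdom S' = opdom S \<longrightarrow> S' = S"
    using max unfolding D_maximal_pm_def by blast
  show "pm_polar_D T \<subseteq> That T"
  proof
    fix p assume p: "p \<in> pm_polar_D T"
    obtain x xs where p_eq: "p = (x, xs)" by (cases p)
    show "p \<in> That T"
    proof (cases "x \<in> zeros T")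
      case True
      with p show ?thesis by (auto simp: p_eq pm_polar_D_def intro: pm_polar_at_zero_in_That)
    next
      case False
      have "p \<in> pm_polar_D S"
        using p pm_polar_D_subset_pm_polar_of_equivalent[OF pmS equiv cvx] equiv
        by (auto simp: pm_polar_D_def op_equivalent_def)
      then have "(x, xs) \<in> S"
        using maximal_pseudomonotone_contains_pm_polar_D[OF pmS maxS] p_eq by blast
      then have "xs \<in> pcone_open (opval T x)" using op_equivalent_pcone_open[OF equiv _ False] by blast
      with False p show ?thesis by (auto simp: That_def p_eq pm_polar_D_def)
    qed
  qed
qed

theorem mainTheorem15:
  fixes T :: "('a::banach \<times> ('a \<Rightarrow>\<^sub>L real)) set"
  assumes "pseudomonotone T"
  shows "(That T = pm_polar_D T \<longrightarrow> D_maximal_pm T) \<and>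
         (convex (opdom T) \<longrightarrow> D_maximal_pm T \<longrightarrow> That T = pm_polar_D T)"
  using D_maximal_pm_if_That_eq_pm_polar_D[OF assms] That_eq_pm_polar_D_if_D_maximal_pm[OF assms]
  by blast

end
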